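(* For all $s\ge1$, $\sum_{k=0}^{3}P_k(s)\,E(s+k,0)=0$, where $P_0(s)=2s^3+s^2-8s+5$, $P_1(s)=-26s^3-93s^2-82s-30$, $P_2(s)=-26s^3-141s^2-226s-81$, $P_3(s)=2s^3+17s^2+40s+16$.
   Context: A $p$-string of length $s$ is a correctly matched string of $s$ pairs of parentheses; there are $C_s=\frac{1}{s+1}\binom{2s}{s}$ of them. Given $p$-strings $U$ (upper), $W$ (lower) of length $s$, the meander graph $\Gamma^1_{2s-1}$ is obtained by marking points $0,1,\dots,2s$ on the $x$-axis, taking the segment $[0,2s]$, joining points $a,b$ by an upper semicircle for each matched pair of $U$ at positions $a<b$ (positions $1,\dots,2s$), and points $a-1,b-1$ by a lower semicircle for each matched pair of $W$ at positions $a<b$; the vertices are $1,\dots,2s-1$. A pierced circle at position $i$ ($1\le i\le2s-2$) is present if vertices $i,i+1$ are joined both by an upper and a lower semicircle. $E(s,0)$ is the number of pairs $(U,W)$ whose meander graph has no pierced circle; equivalently $E(s,0)=\sum_{m=0}^{s}(-1)^m\binom{2s-m-1}{m}C_{s-m}^2$. *)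

theory Defs
  imports Main
begin

definition catalan :: "nat \<Rightarrow> int" where
  "catalan n = int ((2*n choose n) div (n+1))"

definition E0 :: "nat \<Rightarrow> int" where
  "E0 s = (\<Sum>m=0..s. (-1)^m * int ((2*s - m - 1) choose m) * (catalan (s - m))^2)"

end

theory Submission
  imports Defs HOL.Rat
begin

(* Reversing the summation index (b = n - 1 - m) writes E0 n as (-1)^n times the sum over b of
   E0_term n b = (-1)^(b+1) C(n+b, 2b+1) Cat(b+1)^2, which is hypergeometric in both n and b.
   The recurrence is then an instance of Zeilberger's creative telescoping: the four shifts
   E0_term (s+k) b are polynomial multiples of a single base term, and the combination
   sum_k (-1)^k P_k(s) E0_term (s+k) b equals G(b+1) - G(b) for the certificate
   G(b) = 2b(b+2)^2 (2s+1)(2s+3)(2s+5) base_term s b.  Summing over b < s+3 telescopes to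
   G(s+3) - G(0) = 0, because G has the factor b and the base term vanishes at b = s+3. *)

lemma Suc_dvd_central_binomial: "Suc n dvd (2 * n choose n)"
proof (cases n)
  case 0
  then show ?thesis by simp
next
  case (Suc m)
  have "Suc (n + m) = 2 * n" using Suc by simp
  then have "Suc n * (2 * n choose Suc n) = n * (2 * n choose n)"
    using Suc_times_binomial_add[of n m] Suc by metis
  then have "2 * n choose n = Suc n * ((2 * n choose n) - (2 * n choose Suc n))"
    by (simp add: diff_mult_distrib2)
  then show ?thesis by (metis dvd_triv_left)
qed

lemma catalan_mult_Suc: "int (Suc n) * catalan n = int (2 * n choose n)"
proof -
  obtain q where q: "2 * n choose n = Suc n * q"
    using Suc_dvd_central_binomial by blast
  then have "catalan n = int q"
    unfolding catalan_def q using nonzero_mult_div_cancel_left[of "Suc n" q] by (simp del: mult_Suc)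
  then show ?thesis by (simp only: q of_nat_mult)
qed

lemma Suc_mult_central_binomial_Suc:
  "Suc n * (2 * Suc n choose Suc n) = 2 * (2 * n + 1) * (2 * n choose n)"
proof -
  have "Suc n * (2 * Suc n choose Suc n) = 2 * (Suc n * (Suc (2 * n) choose Suc n))"
    using Suc_times_binomial_eq[of "Suc (2 * n)" n] binomial_symmetric[of n "Suc (2 * n)"]
    by (simp add: algebra_simps)
  also have "Suc n * (Suc (2 * n) choose Suc n) = Suc (2 * n) * (2 * n choose n)"
    using Suc_times_binomial_eq[of "2 * n" n] by simp
  finally show ?thesis by simp
qed

lemma catalan_Suc: "int (n + 2) * catalan (Suc n) = 2 * (2 * int n + 1) * catalan n"
proof -
  have "int (Suc n) * (int (n + 2) * catalan (Suc n)) = int (Suc n * (2 * Suc n choose Suc n))"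
    by (simp only: of_nat_mult add_2_eq_Suc' catalan_mult_Suc)
  also have "\<dots> = 2 * (2 * int n + 1) * int (2 * n choose n)"
    by (simp only: Suc_mult_central_binomial_Suc) (simp add: algebra_simps)
  also have "\<dots> = int (Suc n) * (2 * (2 * int n + 1) * catalan n)"
    by (simp only: catalan_mult_Suc[symmetric]) (simp only: ac_simps)
  finally show ?thesis by (simp only: mult_cancel_left) simp
qed

definition E0_term :: "nat \<Rightarrow> nat \<Rightarrow> int" where
  "E0_term n b = (-1) ^ Suc b * int (n + b choose (2 * b + 1)) * catalan (Suc b) ^ 2"

lemma E0_eq_sum_E0_term:
  assumes "1 \<le> n" "n \<le> N"
  shows "E0 n = (-1) ^ n * (\<Sum>b<N. E0_term n b)"
proof -
  define f where "f m = (-1) ^ m * int ((2 * n - m - 1) choose m) * catalan (n - m) ^ 2" for m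
  have "E0 n = (\<Sum>m<n. f m) + f n"
    unfolding E0_def f_def by (simp add: atLeast0AtMost lessThan_Suc_atMost[symmetric])
  also have "f n = 0"
    using assms by (simp add: f_def)
  also have "(\<Sum>m<n. f m) = (\<Sum>b<n. f (n - Suc b))"
    by (rule sum.nat_diff_reindex[symmetric])
  also have "\<dots> = (-1) ^ n * (\<Sum>b<n. E0_term n b)"
    unfolding sum_distrib_left
  proof (rule sum.cong)
    fix b assume "b \<in> {..<n}"
    then have b: "b < n" by simp
    have "2 * n - (n - Suc b) - 1 = n + b" "n - (n - Suc b) = Suc b" using b by auto
    moreover have "n + b choose (n - Suc b) = n + b choose (2 * b + 1)"
      using b binomial_symmetric[of "n - Suc b" "n + b"] by (simp add: mult_2)
    moreover have "(-1 :: int) ^ (n - Suc b) = (-1) ^ n * (-1) ^ Suc b"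
      using b by (simp add: minus_one_power_iff)
    ultimately show "f (n - Suc b) = (-1) ^ n * E0_term n b"
      by (simp add: f_def E0_term_def)
  qed simp
  also have "(\<Sum>b<n. E0_term n b) = (\<Sum>b<N. E0_term n b)"
    by (rule sum.mono_neutral_left) (use assms in \<open>auto simp: E0_term_def\<close>)
  finally show ?thesis by (simp add: sum_distrib_left)
qed

lemma gbinomial_mult_pochhammer:
  fixes x :: "'a :: field_char_0"
  shows "(x gchoose j) * pochhammer (x + 1) d
       = ((x + of_nat d) gchoose j) * pochhammer (x - of_nat j + 1) d"
proof (induction d)
  case 0
  then show ?case by simp
next
  case (Suc d)
  have absorb: "(x + of_nat d + 1) * ((x + of_nat d) gchoose j)
      = (x + of_nat d + 1 - of_nat j) * ((x + of_nat (Suc d)) gchoose j)"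
    using gbinomial_absorb_comp[of "x + of_nat d + 1" j] by (simp add: algebra_simps)
  have "(x gchoose j) * pochhammer (x + 1) (Suc d)
      = ((x gchoose j) * pochhammer (x + 1) d) * (x + of_nat d + 1)"
    by (simp add: pochhammer_Suc algebra_simps)
  also have "\<dots> = pochhammer (x - of_nat j + 1) d * ((x + of_nat d + 1) * ((x + of_nat d) gchoose j))"
    by (subst Suc.IH) (simp only: mult_ac)
  also have "\<dots> = ((x + of_nat (Suc d)) gchoose j) * pochhammer (x - of_nat j + 1) (Suc d)"
    by (simp only: absorb pochhammer_Suc) (simp add: algebra_simps)
  finally show ?case .
qed

lemma gbinomial_Suc_Suc_mult:
  fixes a :: "'a :: field_char_0"
  shows "of_nat (Suc k) * of_nat (Suc (Suc k)) * ((a + 1) gchoose Suc (Suc k))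
       = (a + 1) * (a - of_nat k) * (a gchoose k)"
proof -
  have "of_nat (Suc k) * of_nat (Suc (Suc k)) * ((a + 1) gchoose Suc (Suc k))
      = (a + 1) * (of_nat (Suc k) * (a gchoose Suc k))"
    using gbinomial_absorption[of "Suc k" "a + 1"] by (simp add: mult.assoc)
  also have "of_nat (Suc k) * (a gchoose Suc k) = (a - of_nat k) * (a gchoose k)"
    by (simp only: gbinomial_absorption gbinomial_absorb_comp)
  finally show ?thesis by (simp only: ac_simps)
qed

lemma of_int_E0_term:
  "(of_int (E0_term n b) :: 'a :: field_char_0)
     = (-1) ^ Suc b * of_int (catalan (Suc b)) ^ 2 * (of_nat (n + b) gchoose (2 * b + 1))"
  by (simp add: E0_term_def binomial_gbinomial)

definition base_term :: "nat \<Rightarrow> nat \<Rightarrow> rat" where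
  "base_term s b = of_int (E0_term (s + 3) b) / pochhammer (of_nat (s + b) + 1) 3"

lemma E0_term_shift:
  assumes "k \<le> 3"
  shows "of_int (E0_term (s + k) b) = base_term s b * pochhammer (of_nat (s + b) + 1) k
           * pochhammer (of_nat (s + k) - of_nat b) (3 - k)"
proof -
  let ?x = "of_nat (s + k + b) :: rat"
  have binom: "(?x gchoose (2 * b + 1)) * pochhammer (?x + 1) (3 - k)
      = (of_nat (s + 3 + b) gchoose (2 * b + 1)) * pochhammer (of_nat (s + k) - of_nat b) (3 - k)"
    using gbinomial_mult_pochhammer[of ?x "2 * b + 1" "3 - k"] assms by (simp add: algebra_simps)
  have split: "pochhammer (of_nat (s + b) + 1) 3
      = pochhammer (of_nat (s + b) + 1) k * pochhammer (?x + 1) (3 - k)"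
    using pochhammer_product[OF assms, of "of_nat (s + b) + 1 :: rat"] by (simp add: algebra_simps)
  have "pochhammer (?x + 1) (3 - k) > 0" by (intro pochhammer_pos) simp
  moreover have "pochhammer (of_nat (s + b) + 1 :: rat) k > 0" by (intro pochhammer_pos) simp
  ultimately show ?thesis
    unfolding base_term_def of_int_E0_term split using binom
    by (simp add: field_simps)
qed

lemma E0_term_Suc:
  "of_nat (b + 1) * of_nat (b + 3) ^ 2 * (of_int (E0_term n (Suc b)) :: rat)
     = - 2 * (2 * of_nat b + 3) * (of_nat (n + b) + 1) * (of_nat n - of_nat b - 1)
         * of_int (E0_term n b)"
proof -
  define a where "a = (of_nat (n + b) :: rat)"
  define A where "A = (a gchoose (2 * b + 1))"
  define A' where "A' = (a + 1 gchoose (2 * Suc b + 1))"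
  define C where "C = (of_int (catalan (Suc b)) :: rat)"
  define C' where "C' = (of_int (catalan (Suc (Suc b))) :: rat)"
  define \<sigma> where "\<sigma> = (-1 :: rat) ^ Suc b"
  have binom: "of_nat (2 * b + 2) * of_nat (2 * b + 3) * A' = (a + 1) * (of_nat n - of_nat b - 1) * A"
  proof -
    have "A' = (a + 1 gchoose Suc (Suc (2 * b + 1)))"
      unfolding A'_def by (rule arg_cong2[where f = gbinomial]) simp_all
    then have "of_nat (Suc (2 * b + 1)) * of_nat (Suc (Suc (2 * b + 1))) * A'
        = (a + 1) * (a - of_nat (2 * b + 1)) * A"
      unfolding A_def by (simp only: gbinomial_Suc_Suc_mult)
    then show ?thesis by (simp add: a_def algebra_simps)
  qed
  have cat: "(of_nat b + 3) * C' = 2 * (2 * of_nat b + 3) * C"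
    using arg_cong[OF catalan_Suc[of "Suc b"], of "of_int :: int \<Rightarrow> rat"]
    by (simp add: C_def C'_def algebra_simps)
  have "of_int (E0_term n (Suc b)) = - \<sigma> * C' ^ 2 * A'"
    unfolding of_int_E0_term \<sigma>_def C'_def A'_def a_def
    by (simp add: algebra_simps)
  then have "of_nat (b + 1) * of_nat (b + 3) ^ 2 * (of_int (E0_term n (Suc b)) :: rat)
      = - \<sigma> * ((of_nat b + 3) * C') ^ 2 * (of_nat (b + 1) * A')"
    by (simp add: algebra_simps power2_eq_square)
  also have "\<dots> = - \<sigma> * 2 * (2 * of_nat b + 3) * C ^ 2 * (of_nat (2 * b + 2) * of_nat (2 * b + 3) * A')"
    unfolding cat by (simp add: algebra_simps power2_eq_square)
  also have "\<dots> = - 2 * (2 * of_nat b + 3) * (a + 1) * (of_nat n - of_nat b - 1) * (\<sigma> * C ^ 2 * A)"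
    unfolding binom by (simp add: algebra_simps)
  also have "\<sigma> * C ^ 2 * A = of_int (E0_term n b)"
    unfolding of_int_E0_term \<sigma>_def C_def A_def a_def ..
  finally show ?thesis by (simp add: a_def)
qed

lemma base_term_Suc:
  "base_term s (Suc b) * (of_nat (b + 1) * of_nat (b + 3) ^ 2)
     = - 2 * (2 * of_nat b + 3) * (of_nat (s + b) + 1) * (of_nat s + 2 - of_nat b) * base_term s b"
proof -
  define x where "x = (of_nat (s + b) :: rat)"
  define w where "w = (of_int (E0_term (s + 3) b) :: rat)"
  have poch: "pochhammer (of_nat (s + Suc b) + 1) 3 = (x + 2) * (x + 3) * (x + 4)"
    "pochhammer (of_nat (s + b) + 1) 3 = (x + 1) * (x + 2) * (x + 3)"
    by (simp_all add: x_def pochhammer_Suc eval_nat_numeral algebra_simps)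
  have nz: "x + 1 \<noteq> 0" "x + 2 \<noteq> 0" "x + 3 \<noteq> 0" "x + 4 \<noteq> 0"
    by (simp_all add: x_def add_nonneg_pos)
  define c where "c = - 2 * (2 * of_nat b + 3) * (of_nat s + 2 - of_nat b :: rat)"
  have "base_term s (Suc b) * (of_nat (b + 1) * of_nat (b + 3) ^ 2)
      = of_nat (b + 1) * of_nat (b + 3) ^ 2 * of_int (E0_term (s + 3) (Suc b)) / ((x + 2) * (x + 3) * (x + 4))"
    unfolding base_term_def poch by simp
  also have "\<dots> = (c * w * (x + 4)) / ((x + 2) * (x + 3) * (x + 4))"
    unfolding E0_term_Suc w_def c_def by (simp add: x_def algebra_simps)
  also have "\<dots> = (c * w) / ((x + 2) * (x + 3))"
    using nz by simp
  also have "\<dots> = c * (x + 1) * (w / ((x + 1) * (x + 2) * (x + 3)))"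
    using nz by simp
  also have "w / ((x + 1) * (x + 2) * (x + 3)) = base_term s b"
    unfolding base_term_def poch w_def ..
  finally show ?thesis by (simp add: x_def c_def)
qed

definition recurrence_op :: "nat \<Rightarrow> (nat \<Rightarrow> int) \<Rightarrow> int" where
  "recurrence_op s f =
       (2*int s^3 + int s^2 - 8*int s + 5) * f 0
     + (-26*int s^3 - 93*int s^2 - 82*int s - 30) * f 1
     + (-26*int s^3 - 141*int s^2 - 226*int s - 81) * f 2
     + (2*int s^3 + 17*int s^2 + 40*int s + 16) * f 3"

lemma recurrence_op_sum:
  "recurrence_op s (\<lambda>k. \<Sum>b\<in>B. g k b) = (\<Sum>b\<in>B. recurrence_op s (\<lambda>k. g k b))"
  by (simp add: recurrence_op_def sum_distrib_left sum.distrib)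

lemma recurrence_op_scale:
  "recurrence_op s (\<lambda>k. c * f k) = c * recurrence_op s f"
  by (simp add: recurrence_op_def algebra_simps)

definition E0_certificate :: "nat \<Rightarrow> nat \<Rightarrow> rat" where
  "E0_certificate s b = 2 * of_nat b * (of_nat b + 2) ^ 2
     * ((2 * of_nat s + 1) * (2 * of_nat s + 3) * (2 * of_nat s + 5)) * base_term s b"

lemma recurrence_op_E0_term_telescopes:
  "of_int (recurrence_op s (\<lambda>k. (-1) ^ k * E0_term (s + k) b))
     = E0_certificate s (Suc b) - E0_certificate s b"
proof -
  define t where "t = base_term s b"
  define S where "S = (of_nat s :: rat)"
  define B where "B = (of_nat b :: rat)"
  define K where "K = (2 * S + 1) * (2 * S + 3) * (2 * S + 5)"
  have shift: "of_int (E0_term (s + k) b)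
      = t * pochhammer (S + B + 1) k * pochhammer (S + of_nat k - B) (3 - k)"
    if "k \<le> 3" for k
    using E0_term_shift[OF that] by (simp add: t_def S_def B_def)
  have w0: "of_int (E0_term s b) = t * ((S - B) * (S - B + 1) * (S - B + 2))"
    using shift[of 0] by (simp add: pochhammer_Suc eval_nat_numeral algebra_simps)
  have w1: "of_int (E0_term (s + 1) b) = t * ((S + B + 1) * (S + 1 - B) * (S + 2 - B))"
    using shift[of 1] by (simp add: pochhammer_Suc eval_nat_numeral algebra_simps)
  have w2: "of_int (E0_term (s + 2) b) = t * ((S + B + 1) * (S + B + 2) * (S + 2 - B))"
    using shift[of 2] by (simp add: pochhammer_Suc eval_nat_numeral algebra_simps)
  have w3: "of_int (E0_term (s + 3) b) = t * ((S + B + 1) * (S + B + 2) * (S + B + 3))"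
    using shift[of 3] by (simp add: pochhammer_Suc eval_nat_numeral algebra_simps)
  have "E0_certificate s (Suc b) = 2 * K * (base_term s (Suc b) * (of_nat (b + 1) * of_nat (b + 3) ^ 2))"
    by (simp add: E0_certificate_def K_def S_def algebra_simps)
  also have "\<dots> = - 4 * K * (2 * B + 3) * (S + B + 1) * (S + 2 - B) * t"
    unfolding base_term_Suc t_def S_def B_def by (simp add: algebra_simps)
  finally have cert_Suc: "E0_certificate s (Suc b) = - 4 * K * (2 * B + 3) * (S + B + 1) * (S + 2 - B) * t" .
  have cert: "E0_certificate s b = 2 * B * (B + 2) ^ 2 * K * t"
    by (simp add: E0_certificate_def t_def K_def S_def B_def)
  have "of_int (recurrence_op s (\<lambda>k. (-1) ^ k * E0_term (s + k) b))
      = (2*S^3 + S^2 - 8*S + 5) * of_int (E0_term s b)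
      - (-26*S^3 - 93*S^2 - 82*S - 30) * of_int (E0_term (s + 1) b)
      + (-26*S^3 - 141*S^2 - 226*S - 81) * of_int (E0_term (s + 2) b)
      - (2*S^3 + 17*S^2 + 40*S + 16) * of_int (E0_term (s + 3) b)"
    by (simp add: recurrence_op_def S_def)
  also have "\<dots> = E0_certificate s (Suc b) - E0_certificate s b"
    unfolding w0 w1 w2 w3 cert_Suc cert K_def
    by (simp add: algebra_simps power2_eq_square power3_eq_cube)
  finally show ?thesis .
qed

lemma recurrence_op_sum_E0_term:
  "recurrence_op s (\<lambda>k. \<Sum>b<s + 3. (-1) ^ k * E0_term (s + k) b) = 0"
proof -
  have "(of_int (recurrence_op s (\<lambda>k. \<Sum>b<s + 3. (-1) ^ k * E0_term (s + k) b)) :: rat)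
      = (\<Sum>b<s + 3. E0_certificate s (Suc b) - E0_certificate s b)"
    by (simp only: recurrence_op_sum of_int_sum recurrence_op_E0_term_telescopes)
  also have "\<dots> = E0_certificate s (s + 3) - E0_certificate s 0"
    by (rule sum_lessThan_telescope)
  also have "\<dots> = 0"
    by (simp add: E0_certificate_def base_term_def E0_term_def)
  finally show ?thesis by simp
qed

theorem lemma4p2:
  fixes s :: nat
  assumes "s \<ge> 1"
  shows "(2*int s^3 + int s^2 - 8*int s + 5) * E0 s
       + (-26*int s^3 - 93*int s^2 - 82*int s - 30) * E0 (s+1)
       + (-26*int s^3 - 141*int s^2 - 226*int s - 81) * E0 (s+2)
       + (2*int s^3 + 17*int s^2 + 40*int s + 16) * E0 (s+3) = 0"
proof -
  have E0: "E0 (s + k) = (-1) ^ s * (\<Sum>b<s + 3. (-1) ^ k * E0_term (s + k) b)" if "k \<le> 3" for k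
    using E0_eq_sum_E0_term[of "s + k" "s + 3"] assms that
    by (simp add: power_add sum_distrib_left[symmetric])
  have "recurrence_op s (\<lambda>k. E0 (s + k))
      = recurrence_op s (\<lambda>k. (-1) ^ s * (\<Sum>b<s + 3. (-1) ^ k * E0_term (s + k) b))"
    unfolding recurrence_op_def using E0[of 0] E0[of 1] E0[of 2] E0[of 3] by simp
  also have "\<dots> = 0"
    by (simp only: recurrence_op_scale recurrence_op_sum_E0_term mult_zero_right)
  finally show ?thesis
    by (simp add: recurrence_op_def)
qed

end
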